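(* Let $A,B$ be nonzero integers, and let $\{u_n\}_{n\ge0}$, $\{v_n\}_{n\ge0}$ be the Lucas sequences defined by $u_0=0$, $u_1=1$, $u_n=Au_{n-1}-Bu_{n-2}$ for $n\ge2$, and $v_0=2$, $v_1=A$, $v_n=Av_{n-1}-Bv_{n-2}$ for $n\ge2$. Let $\Delta=A^2-4B$. For each positive integer $n$, let $w_n$ be the largest divisor of $u_n$ that is coprime to each of $u_1,u_2,\ldots,u_{n-1}$. Then for every integer $n\ge5$, $$\sum_{j=1}^{n-1}\frac{v_j}{u_j}\equiv\frac{(n^2-1)\Delta}{6}\cdot\frac{u_n}{v_n}\pmod{w_n^2}.$$
   Context: A congruence between rational numbers modulo an integer $M$ means that the difference, written as a fraction whose denominator is coprime to $M$, has numerator divisible by $M$. *)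

theory Defs
  imports Complex_Main "HOL-Computational_Algebra.Primes"
begin

fun lucas_u :: "int \<Rightarrow> int \<Rightarrow> nat \<Rightarrow> int" where
  "lucas_u A B 0 = 0"
| "lucas_u A B (Suc 0) = 1"
| "lucas_u A B (Suc (Suc n)) = A * lucas_u A B (Suc n) - B * lucas_u A B n"

fun lucas_v :: "int \<Rightarrow> int \<Rightarrow> nat \<Rightarrow> int" where
  "lucas_v A B 0 = 2"
| "lucas_v A B (Suc 0) = A"
| "lucas_v A B (Suc (Suc n)) = A * lucas_v A B (Suc n) - B * lucas_v A B n"

definition lucas_w :: "int \<Rightarrow> int \<Rightarrow> nat \<Rightarrow> int" where
  "lucas_w A B n = (GREATEST d::int. d dvd lucas_u A B n \<and>
                      (\<forall>j\<in>{1..<n}. coprime d (lucas_u A B j)))"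

definition rat_cong :: "rat \<Rightarrow> rat \<Rightarrow> int \<Rightarrow> bool" where
  "rat_cong a b M = (\<exists>p q::int. q \<noteq> 0 \<and> coprime q M \<and>
                        a - b = of_int p / of_int q \<and> M dvd p)"

end

theory Submission
  imports Defs
begin

(* Let d be a divisor of u_n coprime to u_1, ..., u_(n-1), put c_j = v_j / u_j and
   \<Delta> = A^2 - 4B, and compute in the rationals with denominators coprime to d. Such a d is
   coprime to 2, 3, A, B and v_n, because it is coprime to u_2, u_3 and u_4.
   From 2 u_n = u_j v_(n-j) + u_(n-j) v_j the sum of the c_j equals u_n times
   T = sum 1 / (u_j u_(n-j)), so it suffices to know T modulo d. The identity
   u_n v_j - v_n u_j = 2 B^j u_(n-j) gives 1 / (u_j u_(n-j)) == (\<Delta> - c_j^2) / (2 v_n), and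
   summing the addition formula c_(i+j) (c_i + c_j) = c_i c_j + \<Delta> over all pairs of
   indices modulo n, using c_(n-j) == - c_j, gives 3 sum c_j^2 == - (n - 1) (n - 2) \<Delta>.
   Together, T == (n^2 - 1) \<Delta> / (6 v_n) modulo d. *)

lemma lucas_recurrence_unique:
  fixes f g :: "nat \<Rightarrow> 'a::ring"
  assumes "\<And>j. f (Suc (Suc j)) = A * f (Suc j) - B * f j"
      and "\<And>j. g (Suc (Suc j)) = A * g (Suc j) - B * g j"
      and "f 0 = g 0" and "f 1 = g 1"
  shows "f j = g j"
proof -
  have "f j = g j \<and> f (Suc j) = g (Suc j)"
    by (induction j) (use assms in auto)
  then show ?thesis by simp
qed

lemma lucas_v_eq_u: "lucas_v A B j = 2 * lucas_u A B (Suc j) - A * lucas_u A B j"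
  by (rule lucas_recurrence_unique[where A = A and B = B]) (auto simp: algebra_simps)

lemma lucas_u_add:
  "2 * lucas_u A B (i + j) = lucas_u A B i * lucas_v A B j + lucas_u A B j * lucas_v A B i"
proof (rule lucas_recurrence_unique[where A = A and B = B and f = "\<lambda>j. 2 * lucas_u A B (i + j)"])
  show "2 * lucas_u A B (i + 1) = lucas_u A B i * lucas_v A B 1 + lucas_u A B 1 * lucas_v A B i"
    using lucas_v_eq_u[of A B i] by simp
qed (auto simp: algebra_simps)

lemma lucas_v_add:
  "2 * lucas_v A B (i + j) =
     lucas_v A B i * lucas_v A B j + (A ^ 2 - 4 * B) * lucas_u A B i * lucas_u A B j"
proof (rule lucas_recurrence_unique[where A = A and B = B and f = "\<lambda>j. 2 * lucas_v A B (i + j)"])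
  have "lucas_v A B (Suc i) = A * lucas_u A B (Suc i) - 2 * B * lucas_u A B i"
    unfolding lucas_v_eq_u[of A B "Suc i"] by (simp add: algebra_simps)
  then show "2 * lucas_v A B (i + 1) =
      lucas_v A B i * lucas_v A B 1 + (A ^ 2 - 4 * B) * lucas_u A B i * lucas_u A B 1"
    unfolding lucas_v_eq_u[of A B i] by (simp add: algebra_simps power2_eq_square)
qed (auto simp: algebra_simps)

lemma lucas_u_cassini:
  "lucas_u A B (Suc j) ^ 2 - A * lucas_u A B j * lucas_u A B (Suc j) + B * lucas_u A B j ^ 2 =
     B ^ j"
proof (induction j)
  case (Suc j)
  have "lucas_u A B (Suc (Suc j)) ^ 2 - A * lucas_u A B (Suc j) * lucas_u A B (Suc (Suc j))
          + B * lucas_u A B (Suc j) ^ 2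
      = B * (lucas_u A B (Suc j) ^ 2 - A * lucas_u A B j * lucas_u A B (Suc j)
          + B * lucas_u A B j ^ 2)"
    by (simp add: algebra_simps power2_eq_square)
  with Suc show ?case by simp
qed simp

lemma lucas_v_sq_eq: "lucas_v A B j ^ 2 - (A ^ 2 - 4 * B) * lucas_u A B j ^ 2 = 4 * B ^ j"
proof -
  have "lucas_v A B j ^ 2 - (A ^ 2 - 4 * B) * lucas_u A B j ^ 2
      = 4 * (lucas_u A B (Suc j) ^ 2 - A * lucas_u A B j * lucas_u A B (Suc j)
          + B * lucas_u A B j ^ 2)"
    unfolding lucas_v_eq_u[of A B j] by (simp add: algebra_simps power2_eq_square)
  then show ?thesis using lucas_u_cassini[of A B j] by simp
qed

lemma lucas_u_sub:
  "lucas_u A B (m + j) * lucas_v A B j - lucas_v A B (m + j) * lucas_u A B j =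
     2 * B ^ j * lucas_u A B m"
proof -
  have "2 * (lucas_u A B (m + j) * lucas_v A B j - lucas_v A B (m + j) * lucas_u A B j)
      = (2 * lucas_u A B (m + j)) * lucas_v A B j - (2 * lucas_v A B (m + j)) * lucas_u A B j"
    by (simp add: algebra_simps)
  also have "\<dots> = lucas_u A B m * (lucas_v A B j ^ 2 - (A ^ 2 - 4 * B) * lucas_u A B j ^ 2)"
    unfolding lucas_u_add[of A B m j] lucas_v_add[of A B m j]
    by (simp add: algebra_simps power2_eq_square)
  also have "\<dots> = 2 * (2 * B ^ j * lucas_u A B m)"
    using lucas_v_sq_eq[of A B j] by simp
  finally show ?thesis by simp
qed

lemma lucas_u_minus_A_power_dvd: "n \<ge> 1 \<Longrightarrow> B dvd lucas_u A B n - A ^ (n - 1)"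
proof (induction A B n rule: lucas_u.induct)
  case (3 A B m)
  have "lucas_u A B (Suc (Suc m)) - A ^ (Suc (Suc m) - 1) =
      A * (lucas_u A B (Suc m) - A ^ m) - B * lucas_u A B m"
    by (simp add: algebra_simps)
  moreover have "B dvd A * (lucas_u A B (Suc m) - A ^ m) - B * lucas_u A B m"
    using 3 by simp
  ultimately show ?case by (simp only:)
qed simp_all

lemma lucas_u_3: "lucas_u A B 3 = A ^ 2 - B"
  by (simp add: eval_nat_numeral algebra_simps power2_eq_square)

lemma three_dvd_lucas_u_3_or_4:
  assumes "\<not> 3 dvd A" "\<not> 3 dvd B"
  shows "3 dvd lucas_u A B 3 \<or> 3 dvd lucas_u A B 4"
proof -
  have "A mod 3 = 1 \<or> A mod 3 = 2" "B mod 3 = 1 \<or> B mod 3 = 2"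
    using assms by presburger+
  moreover have "A ^ 2 mod 3 = (A mod 3) ^ 2 mod 3"
    by (simp add: power_mod)
  ultimately have "A ^ 2 mod 3 = 1"
    by auto
  then have "3 dvd A ^ 2 - B \<or> 3 dvd A ^ 2 - 2 * B"
    using \<open>B mod 3 = 1 \<or> B mod 3 = 2\<close> by presburger
  moreover have "lucas_u A B 4 = A * (A ^ 2 - 2 * B)"
    by (simp add: eval_nat_numeral algebra_simps power2_eq_square)
  ultimately show ?thesis
    by (auto simp: lucas_u_3)
qed

definition integral_at :: "int \<Rightarrow> rat \<Rightarrow> bool" where
  "integral_at d x \<longleftrightarrow> (\<exists>p q. q \<noteq> 0 \<and> coprime q d \<and> x = of_int p / of_int q)"

definition divisible_at :: "int \<Rightarrow> rat \<Rightarrow> bool" where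
  "divisible_at d x \<longleftrightarrow> (\<exists>p q. q \<noteq> 0 \<and> coprime q d \<and> x = of_int p / of_int q \<and> d dvd p)"

lemma rat_cong_iff_divisible_at: "rat_cong a b M \<longleftrightarrow> divisible_at M (a - b)"
  unfolding rat_cong_def divisible_at_def by blast

lemma integral_at_of_int: "integral_at d (of_int a)"
  unfolding integral_at_def by (intro exI[of _ a] exI[of _ 1]) simp

lemma integral_at_frac:
  assumes "coprime q d"
  shows "integral_at d (of_int p / of_int q)"
proof (cases "q = 0")
  case True
  then show ?thesis
    using integral_at_of_int[of d 0] by simp
next
  case False
  with assms show ?thesis
    unfolding integral_at_def by blast
qed

lemma integral_at_add: "integral_at d x \<Longrightarrow> integral_at d y \<Longrightarrow> integral_at d (x + y)"
  unfolding integral_at_def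
proof (elim exE conjE)
  fix p q p' q'
  assume "q \<noteq> 0" "coprime q d" "x = of_int p / of_int q"
    and "q' \<noteq> 0" "coprime q' d" "y = of_int p' / of_int q'"
  then show "\<exists>p q. q \<noteq> 0 \<and> coprime q d \<and> x + y = of_int p / of_int q"
    by (intro exI[of _ "p * q' + p' * q"] exI[of _ "q * q'"]) (auto simp: field_simps)
qed

lemma integral_at_mult: "integral_at d x \<Longrightarrow> integral_at d y \<Longrightarrow> integral_at d (x * y)"
  unfolding integral_at_def
proof (elim exE conjE)
  fix p q p' q'
  assume "q \<noteq> 0" "coprime q d" "x = of_int p / of_int q"
    and "q' \<noteq> 0" "coprime q' d" "y = of_int p' / of_int q'"
  then show "\<exists>p q. q \<noteq> 0 \<and> coprime q d \<and> x * y = of_int p / of_int q"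
    by (intro exI[of _ "p * p'"] exI[of _ "q * q'"]) auto
qed

lemma integral_at_sum: "(\<And>i. i \<in> S \<Longrightarrow> integral_at d (f i)) \<Longrightarrow> integral_at d (sum f S)"
  by (induction S rule: infinite_finite_induct)
    (auto intro: integral_at_add simp: integral_at_of_int[of d 0, simplified])

lemma divisible_at_of_int: "d dvd a \<Longrightarrow> divisible_at d (of_int a)"
  unfolding divisible_at_def by (intro exI[of _ a] exI[of _ 1]) simp

lemma divisible_at_0: "divisible_at d 0"
  using divisible_at_of_int[of d 0] by simp

lemma divisible_at_frac:
  assumes "d dvd p" "coprime q d"
  shows "divisible_at d (of_int p / of_int q)"
proof (cases "q = 0")
  case True
  then show ?thesis
    using divisible_at_0 by simp
next
  case False
  with assms show ?thesis
    unfolding divisible_at_def by blast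
qed

lemma divisible_at_add: "divisible_at d x \<Longrightarrow> divisible_at d y \<Longrightarrow> divisible_at d (x + y)"
  unfolding divisible_at_def
proof (elim exE conjE)
  fix p q p' q'
  assume "q \<noteq> 0" "coprime q d" "x = of_int p / of_int q" "d dvd p"
    and "q' \<noteq> 0" "coprime q' d" "y = of_int p' / of_int q'" "d dvd p'"
  then show "\<exists>p q. q \<noteq> 0 \<and> coprime q d \<and> x + y = of_int p / of_int q \<and> d dvd p"
    by (intro exI[of _ "p * q' + p' * q"] exI[of _ "q * q'"]) (auto simp: field_simps)
qed

lemma divisible_at_mult_right: "divisible_at d x \<Longrightarrow> integral_at d y \<Longrightarrow> divisible_at d (x * y)"
  unfolding divisible_at_def integral_at_def
proof (elim exE conjE)
  fix p q p' q'
  assume "q \<noteq> 0" "coprime q d" "x = of_int p / of_int q" "d dvd p"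
    and "q' \<noteq> 0" "coprime q' d" "y = of_int p' / of_int q'"
  then show "\<exists>p q. q \<noteq> 0 \<and> coprime q d \<and> x * y = of_int p / of_int q \<and> d dvd p"
    by (intro exI[of _ "p * p'"] exI[of _ "q * q'"]) auto
qed

lemma divisible_at_mult_left: "integral_at d y \<Longrightarrow> divisible_at d x \<Longrightarrow> divisible_at d (y * x)"
  using divisible_at_mult_right[of d x y] by (simp add: mult.commute)

lemma divisible_at_diff: "divisible_at d x \<Longrightarrow> divisible_at d y \<Longrightarrow> divisible_at d (x - y)"
  using divisible_at_add[of d x "- y"] divisible_at_mult_right[of d y "- 1"]
  by (simp add: integral_at_of_int[of d "- 1", simplified])

lemma divisible_at_sum: "(\<And>i. i \<in> S \<Longrightarrow> divisible_at d (f i)) \<Longrightarrow> divisible_at d (sum f S)"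
  by (induction S rule: infinite_finite_induct) (auto intro: divisible_at_add simp: divisible_at_0)

lemma divisible_at_square: "d dvd a \<Longrightarrow> divisible_at d x \<Longrightarrow> divisible_at (d ^ 2) (of_int a * x)"
  unfolding divisible_at_def
proof (elim exE conjE)
  fix p q
  assume "q \<noteq> 0" "coprime q d" "x = of_int p / of_int q" "d dvd p" "d dvd a"
  then show "\<exists>p q. q \<noteq> 0 \<and> coprime q (d ^ 2) \<and> of_int a * x = of_int p / of_int q \<and> d ^ 2 dvd p"
    by (intro exI[of _ "a * p"] exI[of _ q]) (auto simp: power2_eq_square intro: mult_dvd_mono)
qed

lemma divisible_at_unit: "is_unit d \<Longrightarrow> divisible_at d x"
  unfolding divisible_at_def
  using quotient_of_denom_pos'[of x]
    quotient_of_div[of x "fst (quotient_of x)" "snd (quotient_of x)"]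
  by (intro exI[of _ "fst (quotient_of x)"] exI[of _ "snd (quotient_of x)"])
    (auto intro: is_unit_right_imp_coprime unit_imp_dvd)

lemma divisible_at_unbounded_imp_zero:
  assumes "\<And>k. \<exists>d \<ge> k. divisible_at d x"
  shows "x = 0"
proof (rule ccontr)
  assume "x \<noteq> 0"
  obtain a b where "quotient_of x = (a, b)"
    by (cases "quotient_of x")
  then have x: "x = of_int a / of_int b" and "b > 0"
    by (simp_all add: quotient_of_div quotient_of_denom_pos)
  with \<open>x \<noteq> 0\<close> have "a \<noteq> 0"
    by auto
  obtain d p q where d: "d \<ge> \<bar>a\<bar> + 1"
    and pq: "q \<noteq> 0" "coprime q d" "x = of_int p / of_int q" "d dvd p"
    using assms[of "\<bar>a\<bar> + 1"] unfolding divisible_at_def by blast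
  have "of_int (p * b) = (of_int (a * q) :: rat)"
    using pq(1,3) x \<open>b > 0\<close> by (simp add: field_simps)
  then have "d dvd a * q"
    using pq(4) by (metis dvd_mult2 of_int_eq_iff)
  with pq(2) have "d dvd a"
    by (metis coprime_commute coprime_dvd_mult_left_iff)
  with \<open>a \<noteq> 0\<close> have "\<bar>d\<bar> \<le> \<bar>a\<bar>"
    by (simp add: dvd_imp_le_int)
  with d show False
    by simp
qed

lemma exists_large_coprime:
  fixes f :: "'a \<Rightarrow> int" and k :: int
  assumes "finite J" "\<And>j. j \<in> J \<Longrightarrow> f j \<noteq> 0"
  shows "\<exists>d \<ge> k. \<forall>j\<in>J. coprime d (f j)"
proof -
  define Q where "Q = (\<Prod>j\<in>J. f j)"
  have "Q \<noteq> 0"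
    using assms by (simp add: Q_def)
  define d where "d = \<bar>k\<bar> * Q ^ 2 + 1"
  from \<open>Q \<noteq> 0\<close> have "1 \<le> Q ^ 2"
    using zero_less_power2[of Q] by linarith
  then have "\<bar>k\<bar> * 1 \<le> \<bar>k\<bar> * Q ^ 2"
    by (intro mult_left_mono) auto
  then have "k \<le> d"
    by (simp add: d_def)
  moreover have "coprime d Q"
    using coprime_add_one_left[of "\<bar>k\<bar> * Q * Q"]
    by (simp add: d_def power2_eq_square algebra_simps)
  then have "coprime d (f j)" if "j \<in> J" for j
    using coprime_divisors[OF dvd_refl dvd_prodI[OF assms(1) that]] by (simp add: Q_def)
  ultimately show ?thesis
    by blast
qed

lemma sum_lessThan_mod_shift:
  fixes h :: "nat \<Rightarrow> 'a::cancel_comm_monoid_add"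
  shows "(\<Sum>j<n. h ((i + j) mod n)) = (\<Sum>j<n. h j)"
proof (induction i)
  case 0
  show ?case by (intro sum.cong) auto
next
  case (Suc i)
  have "(\<Sum>j<n. h ((Suc i + j) mod n)) + h (i mod n) = (\<Sum>j<Suc n. h ((i + j) mod n))"
    by (subst sum.lessThan_Suc_shift) (simp add: add.commute)
  also have "\<dots> = (\<Sum>j<n. h ((i + j) mod n)) + h (i mod n)"
    by simp
  finally show ?case
    using Suc by simp
qed

definition lucas_ratio :: "int \<Rightarrow> int \<Rightarrow> nat \<Rightarrow> rat" where
  "lucas_ratio A B j = of_int (lucas_v A B j) / of_int (lucas_u A B j)"

lemma lucas_ratio_0 [simp]: "lucas_ratio A B 0 = 0"
  by (simp add: lucas_ratio_def)

lemma lucas_ratio_add: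
  assumes "lucas_u A B i \<noteq> 0" "lucas_u A B j \<noteq> 0" "lucas_u A B (i + j) \<noteq> 0"
  shows "lucas_ratio A B (i + j) * (lucas_ratio A B i + lucas_ratio A B j) =
           lucas_ratio A B i * lucas_ratio A B j + of_int (A ^ 2 - 4 * B)"
proof -
  let ?ui = "of_int (lucas_u A B i) :: rat" and ?uj = "of_int (lucas_u A B j) :: rat"
  let ?vi = "of_int (lucas_v A B i) :: rat" and ?vj = "of_int (lucas_v A B j) :: rat"
  have u: "2 * of_int (lucas_u A B (i + j)) = ?ui * ?vj + ?uj * ?vi"
    using arg_cong[OF lucas_u_add[of A B i j], of "of_int :: int \<Rightarrow> rat"] by simp
  have v: "2 * of_int (lucas_v A B (i + j)) = ?vi * ?vj + of_int (A ^ 2 - 4 * B) * ?ui * ?uj"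
    using arg_cong[OF lucas_v_add[of A B i j], of "of_int :: int \<Rightarrow> rat"] by simp
  have "lucas_ratio A B i + lucas_ratio A B j = 2 * of_int (lucas_u A B (i + j)) / (?ui * ?uj)"
    unfolding lucas_ratio_def u using assms by (simp add: field_simps)
  then have "lucas_ratio A B (i + j) * (lucas_ratio A B i + lucas_ratio A B j) =
      2 * of_int (lucas_v A B (i + j)) / (?ui * ?uj)"
    unfolding lucas_ratio_def using assms by (simp add: field_simps)
  also have "\<dots> = lucas_ratio A B i * lucas_ratio A B j + of_int (A ^ 2 - 4 * B)"
    unfolding v lucas_ratio_def using assms by (simp add: field_simps)
  finally show ?thesis .
qed

locale lucas_primitive_divisor =
  fixes A B :: int and n :: nat and d :: int
  assumes n_ge_5: "n \<ge> 5"
    and dvd_u_n: "d dvd lucas_u A B n"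
    and coprime_u_less: "\<forall>j\<in>{1..<n}. coprime d (lucas_u A B j)"
    and not_unit: "\<not> is_unit d"
begin

abbreviation U where "U \<equiv> lucas_u A B"
abbreviation V where "V \<equiv> lucas_v A B"
abbreviation c where "c \<equiv> lucas_ratio A B"
abbreviation \<Delta> where "\<Delta> \<equiv> A ^ 2 - 4 * B"

lemma reflect_mem: "j \<in> {1..<n} \<Longrightarrow> n - j \<in> {1..<n}"
  by auto

lemma U_coprime: "j \<in> {1..<n} \<Longrightarrow> coprime (U j) d"
  using coprime_u_less by (simp add: coprime_commute)

lemma U_nonzero: "j \<in> {1..<n} \<Longrightarrow> U j \<noteq> 0"
  using coprime_u_less not_unit by fastforce

lemma coprime_A: "coprime d A"
proof -
  have "coprime d (U 2)"
    using coprime_u_less n_ge_5 by simp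
  moreover have "U 2 = A"
    by (simp add: eval_nat_numeral)
  ultimately show ?thesis
    by simp
qed

lemma coprime_B: "coprime d B"
proof (rule coprimeI)
  fix g
  assume g: "g dvd d" "g dvd B"
  have "g dvd U n"
    using g(1) dvd_u_n by (rule dvd_trans)
  moreover have "g dvd U n - A ^ (n - 1)"
    using g(2) lucas_u_minus_A_power_dvd[of n B A] n_ge_5 by (simp add: dvd_trans)
  ultimately have "g dvd U n - (U n - A ^ (n - 1))"
    by (rule dvd_diff)
  then have "g dvd A ^ (n - 1)"
    by simp
  moreover have "coprime d (A ^ (n - 1))"
    using coprime_A by simp
  ultimately show "is_unit g"
    using g(1) coprime_common_divisor by blast
qed

lemma coprime_2: "coprime d 2"
proof (rule ccontr)
  assume "\<not> coprime d 2"
  then have "2 dvd d"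
    using prime_imp_coprime[of "2::int" d] by (auto simp: coprime_commute)
  then have "\<not> 2 dvd A" "\<not> 2 dvd B"
    using coprime_A coprime_B coprime_common_divisor[of d _ 2] by auto
  then have "2 dvd U 3"
    by (simp add: lucas_u_3)
  with \<open>2 dvd d\<close> show False
    using coprime_u_less n_ge_5 coprime_common_divisor[of d "U 3" 2] by auto
qed

lemma coprime_3: "coprime d 3"
proof (rule ccontr)
  assume "\<not> coprime d 3"
  then have "3 dvd d"
    using prime_imp_coprime[of "3::int" d] by (auto simp: coprime_commute)
  then have "\<not> 3 dvd A" "\<not> 3 dvd B"
    using coprime_A coprime_B coprime_common_divisor[of d _ 3] by auto
  then have "3 dvd U 3 \<or> 3 dvd U 4"
    by (rule three_dvd_lucas_u_3_or_4)
  with \<open>3 dvd d\<close> show False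
    using coprime_u_less n_ge_5
      coprime_common_divisor[of d "U 3" 3] coprime_common_divisor[of d "U 4" 3]
    by auto
qed

lemma coprime_V_n: "coprime d (V n)"
proof -
  have "coprime d (2 ^ 2 * B ^ n)"
    using coprime_2 coprime_B
    by (simp only: coprime_mult_right_iff coprime_power_right_iff simp_thms)
  then have "coprime d (4 * B ^ n)"
    by simp
  moreover have "V n ^ 2 = 4 * B ^ n + \<Delta> * U n ^ 2"
    using lucas_v_sq_eq[of A B n] by simp
  ultimately have "coprime d (V n ^ 2)"
  proof (intro coprimeI)
    fix g
    assume g: "g dvd d" "g dvd V n ^ 2"
    with dvd_u_n have "g dvd \<Delta> * U n ^ 2"
      by (simp add: dvd_trans power2_eq_square)
    with g(2) \<open>V n ^ 2 = 4 * B ^ n + \<Delta> * U n ^ 2\<close> have "g dvd 4 * B ^ n"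
      by (metis add_diff_cancel_right' dvd_diff)
    with g(1) \<open>coprime d (4 * B ^ n)\<close> show "is_unit g"
      using coprime_common_divisor by blast
  qed
  then show ?thesis
    by simp
qed

lemma V_n_nonzero: "V n \<noteq> 0"
proof
  assume "V n = 0"
  with coprime_V_n have "is_unit d"
    by simp
  with not_unit show False ..
qed

lemma ratio_integral: "j \<in> {1..<n} \<Longrightarrow> integral_at d (c j)"
  unfolding lucas_ratio_def by (rule integral_at_frac[OF U_coprime])

lemma ratio_reflect_add:
  assumes "j \<in> {1..<n}"
  shows "c j + c (n - j) = of_int (2 * U n) / of_int (U j * U (n - j))"
proof -
  have "2 * U n = U j * V (n - j) + U (n - j) * V j"
    using lucas_u_add[of A B j "n - j"] assms by simp
  then show ?thesis
    unfolding lucas_ratio_def using U_nonzero[OF assms] U_nonzero[OF reflect_mem[OF assms]]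
    by (simp add: field_simps)
qed

lemma ratio_reflect_add_divisible: "j \<in> {1..<n} \<Longrightarrow> divisible_at d (c j + c (n - j))"
  unfolding ratio_reflect_add
  by (rule divisible_at_frac) (use dvd_u_n U_coprime reflect_mem in auto)

definition recip_sum :: rat where
  "recip_sum = (\<Sum>j\<in>{1..<n}. 1 / (of_int (U j) * of_int (U (n - j))))"

definition ratio_sum :: rat where
  "ratio_sum = (\<Sum>j\<in>{1..<n}. c j)"

definition ratio_sq_sum :: rat where
  "ratio_sq_sum = (\<Sum>j\<in>{1..<n}. c j ^ 2)"

lemma ratio_sum_eq: "ratio_sum = of_int (U n) * recip_sum"
proof -
  have reflected: "ratio_sum = (\<Sum>j\<in>{1..<n}. c (n - j))"
    unfolding ratio_sum_def by (subst sum.atLeastLessThan_rev) simp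
  have "2 * ratio_sum = ratio_sum + ratio_sum"
    by simp
  also have "\<dots> = (\<Sum>j\<in>{1..<n}. c j + c (n - j))"
    unfolding sum.distrib by (subst (2) reflected) (simp add: ratio_sum_def)
  also have "\<dots> = (\<Sum>j\<in>{1..<n}. 2 * of_int (U n) * (1 / (of_int (U j) * of_int (U (n - j)))))"
    by (rule sum.cong) (simp_all add: ratio_reflect_add)
  also have "\<dots> = 2 * (of_int (U n) * recip_sum)"
    by (simp add: recip_sum_def sum_distrib_left mult.assoc)
  finally show ?thesis
    by simp
qed

lemma recip_sum_integral: "integral_at d recip_sum"
  unfolding recip_sum_def
proof (rule integral_at_sum)
  fix j
  assume "j \<in> {1..<n}"
  then have "coprime (U j * U (n - j)) d"
    using U_coprime reflect_mem by simp
  then show "integral_at d (1 / (of_int (U j) * of_int (U (n - j))))"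
    using integral_at_frac[of "U j * U (n - j)" d 1] by simp
qed

lemma ratio_sum_integral: "integral_at d ratio_sum"
  unfolding ratio_sum_eq by (intro integral_at_mult integral_at_of_int recip_sum_integral)

lemma ratio_sum_divisible: "divisible_at d ratio_sum"
  unfolding ratio_sum_eq
  by (rule divisible_at_mult_right[OF divisible_at_of_int[OF dvd_u_n] recip_sum_integral])

(* The sum equals u_n v_j / (u_j^2 u_(n-j) v_n). *)
lemma recip_term_divisible:
  assumes j: "j \<in> {1..<n}"
  shows "divisible_at d
           (1 / (of_int (U j) * of_int (U (n - j))) + (c j ^ 2 - of_int \<Delta>) / (2 * of_int (V n)))"
proof -
  have uv: "U n * V j - V n * U j = 2 * B ^ j * U (n - j)"
    using lucas_u_sub[of A B "n - j" j] j by simp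
  have "2 * U j * V n + U (n - j) * (V j ^ 2 - \<Delta> * U j ^ 2) =
      2 * U j * V n + 2 * (2 * B ^ j * U (n - j))"
    unfolding lucas_v_sq_eq by (simp add: mult_ac)
  also have "\<dots> = 2 * U n * V j"
    by (simp only: uv[symmetric]) (simp add: algebra_simps)
  finally have "2 * U j * V n + U (n - j) * (V j ^ 2 - \<Delta> * U j ^ 2) = 2 * U n * V j" .
  then have "2 * of_int (U j) * of_int (V n)
      + of_int (U (n - j)) * (of_int (V j) ^ 2 - of_int \<Delta> * of_int (U j) ^ 2) =
      (2 * of_int (U n) * of_int (V j) :: rat)"
    by (metis (mono_tags) of_int_add of_int_diff of_int_mult of_int_numeral of_int_power)
  then have "1 / (of_int (U j) * of_int (U (n - j))) + (c j ^ 2 - of_int \<Delta>) / (2 * of_int (V n)) =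
      of_int (U n * V j) / of_int (U j ^ 2 * U (n - j) * V n)"
    using U_nonzero[OF j] U_nonzero[OF reflect_mem[OF j]] V_n_nonzero
    by (simp add: lucas_ratio_def field_simps power2_eq_square)
  also have "divisible_at d \<dots>"
    using U_coprime[OF j] U_coprime[OF reflect_mem[OF j]] coprime_V_n
    by (intro divisible_at_frac) (auto simp: dvd_u_n coprime_commute)
  finally show ?thesis .
qed

lemma recip_sum_divisible:
  "divisible_at d (recip_sum + (ratio_sq_sum - of_int ((int n - 1) * \<Delta>)) / (2 * of_int (V n)))"
proof -
  have "recip_sum + (ratio_sq_sum - of_int ((int n - 1) * \<Delta>)) / (2 * of_int (V n)) =
      (\<Sum>j\<in>{1..<n}.
         1 / (of_int (U j) * of_int (U (n - j))) + (c j ^ 2 - of_int \<Delta>) / (2 * of_int (V n)))"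
    using n_ge_5
    by (simp add: sum.distrib recip_sum_def ratio_sq_sum_def sum_divide_distrib[symmetric]
        sum_subtractf of_nat_diff)
  also have "divisible_at d \<dots>"
    by (intro divisible_at_sum recip_term_divisible)
  finally show ?thesis .
qed

lemma sum_ratio_rotate:
  assumes "i \<in> {1..<n}"
  shows "(\<Sum>j\<in>{1..<n}. c ((i + j) mod n)) = ratio_sum - c i"
proof -
  have "{..<n} = insert 0 {1..<n}"
    using n_ge_5 by auto
  then have split_0: "(\<Sum>j<n. f j) = f 0 + (\<Sum>j\<in>{1..<n}. f j)" for f :: "nat \<Rightarrow> rat"
    by simp
  have "(\<Sum>j<n. c ((i + j) mod n)) = (\<Sum>j<n. c j)"
    by (rule sum_lessThan_mod_shift)
  with assms show ?thesis
    unfolding split_0 ratio_sum_def by simp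
qed

definition add_defect :: "nat \<Rightarrow> nat \<Rightarrow> rat" where
  "add_defect i j = c ((i + j) mod n) * (c i + c j) - c i * c j - of_int \<Delta>"

(* For i + j > n the addition formula is applied to n - i and n - j, and
   c (n - k) is congruent to - c k modulo d. *)
lemma add_defect_divisible:
  assumes i: "i \<in> {1..<n}" and j: "j \<in> {1..<n}" and "j \<noteq> n - i"
  shows "divisible_at d (add_defect i j)"
proof (cases "i + j < n")
  case True
  then have "add_defect i j = 0"
    unfolding add_defect_def using lucas_ratio_add[of A B i j] U_nonzero i j by auto
  then show ?thesis
    by (simp add: divisible_at_0)
next
  case False
  with assms have "i + j > n"
    by auto
  define k where "k = i + j - n"
  have k: "k \<in> {1..<n}" "(i + j) mod n = k" "(n - i) + (n - j) = n - k"
    using \<open>i + j > n\<close> i j by (auto simp: k_def le_mod_geq)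
  have "c (n - k) * (c (n - i) + c (n - j)) = c (n - i) * c (n - j) + of_int \<Delta>"
    using lucas_ratio_add[of A B "n - i" "n - j"] k U_nonzero reflect_mem i j by auto
  then have "add_defect i j =
      (c k + c (n - k)) * (c i + c j) - c (n - k) * ((c i + c (n - i)) + (c j + c (n - j)))
      - (c i + c (n - i)) * (c j + c (n - j)) + (c i + c (n - i)) * c (n - j)
      + c (n - i) * (c j + c (n - j))"
    unfolding add_defect_def k(2) by (simp add: algebra_simps)
  also have "divisible_at d \<dots>"
    by (intro divisible_at_add divisible_at_diff divisible_at_mult_right divisible_at_mult_left
        ratio_reflect_add_divisible ratio_integral integral_at_add reflect_mem i j k)
  finally show ?thesis .
qed

lemma sum_add_defect:
  "(\<Sum>i\<in>{1..<n}. \<Sum>j\<in>{1..<n}. add_defect i j) =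
     ratio_sum ^ 2 - 2 * ratio_sq_sum - of_int ((int n - 1) ^ 2 * \<Delta>)"
proof -
  have rotated: "(\<Sum>i\<in>{1..<n}. \<Sum>j\<in>{1..<n}. c ((i + j) mod n) * c i) = ratio_sum ^ 2 - ratio_sq_sum"
  proof -
    have "(\<Sum>i\<in>{1..<n}. \<Sum>j\<in>{1..<n}. c ((i + j) mod n) * c i) = (\<Sum>i\<in>{1..<n}. (ratio_sum - c i) * c i)"
      by (intro sum.cong refl) (metis sum_distrib_right sum_ratio_rotate)
    also have "\<dots> = ratio_sum ^ 2 - ratio_sq_sum"
      by (simp add: left_diff_distrib sum_subtractf sum_distrib_left[symmetric] ratio_sum_def
          ratio_sq_sum_def power2_eq_square)
    finally show ?thesis .
  qed
  moreover have "(\<Sum>i\<in>{1..<n}. \<Sum>j\<in>{1..<n}. c ((i + j) mod n) * c j) =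
      (\<Sum>i\<in>{1..<n}. \<Sum>j\<in>{1..<n}. c ((i + j) mod n) * c i)"
    by (subst sum.swap) (simp add: add.commute)
  moreover have "(\<Sum>i\<in>{1..<n}. \<Sum>j\<in>{1..<n}. c i * c j) = ratio_sum ^ 2"
    by (simp add: ratio_sum_def sum_product power2_eq_square)
  moreover have "(\<Sum>i\<in>{1..<n}. \<Sum>j\<in>{1..<n}. (of_int \<Delta> :: rat)) = of_int ((int n - 1) ^ 2 * \<Delta>)"
    using n_ge_5 by (simp add: of_nat_diff power2_eq_square)
  ultimately show ?thesis
    unfolding add_defect_def by (simp add: sum.distrib sum_subtractf algebra_simps)
qed

lemma sum_add_defect_reflect:
  "(\<Sum>i\<in>{1..<n}. add_defect i (n - i)) =
     - (\<Sum>i\<in>{1..<n}. c i * c (n - i)) - of_int ((int n - 1) * \<Delta>)"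
proof -
  have "(\<Sum>i\<in>{1..<n}. add_defect i (n - i)) = (\<Sum>i\<in>{1..<n}. - (c i * c (n - i)) - of_int \<Delta>)"
    by (intro sum.cong refl) (simp add: add_defect_def)
  also have "\<dots> = - (\<Sum>i\<in>{1..<n}. c i * c (n - i)) - of_int ((int n - 1) * \<Delta>)"
    using n_ge_5 by (simp add: sum_subtractf sum_negf of_nat_diff)
  finally show ?thesis .
qed

lemma sum_add_defect_nonreflect_divisible:
  "divisible_at d ((\<Sum>i\<in>{1..<n}. \<Sum>j\<in>{1..<n}. add_defect i j) - (\<Sum>i\<in>{1..<n}. add_defect i (n - i)))"
proof -
  have "(\<Sum>i\<in>{1..<n}. \<Sum>j\<in>{1..<n}. add_defect i j) - (\<Sum>i\<in>{1..<n}. add_defect i (n - i)) =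
      (\<Sum>i\<in>{1..<n}. \<Sum>j\<in>{1..<n} - {n - i}. add_defect i j)"
    unfolding sum_subtractf[symmetric]
  proof (intro sum.cong refl)
    fix i
    assume "i \<in> {1..<n}"
    then show "(\<Sum>j\<in>{1..<n}. add_defect i j) - add_defect i (n - i) =
        (\<Sum>j\<in>{1..<n} - {n - i}. add_defect i j)"
      using sum.remove[OF finite_atLeastLessThan reflect_mem, where g = "add_defect i"] by simp
  qed
  also have "divisible_at d \<dots>"
    by (intro divisible_at_sum add_defect_divisible) auto
  finally show ?thesis .
qed

lemma ratio_sq_sum_divisible:
  "divisible_at d (3 * ratio_sq_sum + of_int ((int n - 1) * (int n - 2) * \<Delta>))"
proof -
  have "(\<Sum>i\<in>{1..<n}. c i * c (n - i)) + ratio_sq_sum = (\<Sum>i\<in>{1..<n}. c i * (c i + c (n - i)))"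
    by (simp add: ratio_sq_sum_def sum.distrib[symmetric] algebra_simps power2_eq_square)
  moreover have "divisible_at d (\<Sum>i\<in>{1..<n}. c i * (c i + c (n - i)))"
    by (intro divisible_at_sum divisible_at_mult_left ratio_integral ratio_reflect_add_divisible)
      auto
  ultimately have reflect_products: "divisible_at d ((\<Sum>i\<in>{1..<n}. c i * c (n - i)) + ratio_sq_sum)"
    by simp
  have "3 * ratio_sq_sum + of_int ((int n - 1) * (int n - 2) * \<Delta>) =
      ratio_sum * ratio_sum + ((\<Sum>i\<in>{1..<n}. c i * c (n - i)) + ratio_sq_sum)
      - ((\<Sum>i\<in>{1..<n}. \<Sum>j\<in>{1..<n}. add_defect i j) - (\<Sum>i\<in>{1..<n}. add_defect i (n - i)))"
    unfolding sum_add_defect sum_add_defect_reflect by (simp add: algebra_simps power2_eq_square)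
  also have "divisible_at d \<dots>"
    by (intro divisible_at_add divisible_at_diff divisible_at_mult_right ratio_sum_divisible
        ratio_sum_integral reflect_products sum_add_defect_nonreflect_divisible)
  finally show ?thesis .
qed

lemma ratio_sum_cong:
  "divisible_at (d ^ 2) ((\<Sum>j=1..n-1. of_int (V j) / of_int (U j)) -
     of_int ((int n ^ 2 - 1) * \<Delta>) / 6 * (of_int (U n) / of_int (V n)))"
proof -
  have "{1..n-1} = {1..<n}"
    using n_ge_5 by auto
  then have sum_eq: "(\<Sum>j=1..n-1. of_int (V j) / of_int (U j)) = of_int (U n) * recip_sum"
    by (simp add: ratio_sum_eq[symmetric] ratio_sum_def lucas_ratio_def)
  define K where "K = of_int ((int n ^ 2 - 1) * \<Delta>) / (6 * of_int (V n) :: rat)"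
  have "coprime d (2 * 3 * V n)"
    using coprime_2 coprime_3 coprime_V_n by (simp only: coprime_mult_right_iff simp_thms)
  then have "coprime (6 * V n) d"
    by (simp add: coprime_commute)
  then have inverse_integral: "integral_at d (1 / of_int (6 * V n))"
    using integral_at_frac[of "6 * V n" d 1] by simp
  (* (n^2 - 1) / 6 = (n - 1) / 2 + (n - 1) (n - 2) / 6 *)
  have "recip_sum - K =
      (recip_sum + (ratio_sq_sum - of_int ((int n - 1) * \<Delta>)) / (2 * of_int (V n)))
      - (3 * ratio_sq_sum + of_int ((int n - 1) * (int n - 2) * \<Delta>)) * (1 / of_int (6 * V n))"
    unfolding K_def using V_n_nonzero by (simp add: field_simps power2_eq_square)
  then have "divisible_at d (recip_sum - K)"
    by (simp only:) (intro divisible_at_diff divisible_at_mult_right recip_sum_divisible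
        ratio_sq_sum_divisible inverse_integral)
  then have "divisible_at (d ^ 2) (of_int (U n) * (recip_sum - K))"
    by (rule divisible_at_square[OF dvd_u_n])
  moreover have "of_int (U n) * (recip_sum - K) =
      of_int (U n) * recip_sum - of_int ((int n ^ 2 - 1) * \<Delta>) / 6 * (of_int (U n) / of_int (V n))"
    by (simp add: K_def field_simps)
  ultimately show ?thesis
    unfolding sum_eq by simp
qed

end

lemma lucas_ratio_sum_cong:
  assumes "n \<ge> 5" "d dvd lucas_u A B n" "\<forall>j\<in>{1..<n}. coprime d (lucas_u A B j)"
  shows "divisible_at (d ^ 2)
           ((\<Sum>j=1..n-1. of_int (lucas_v A B j) / of_int (lucas_u A B j)) -
            of_int ((int n ^ 2 - 1) * (A ^ 2 - 4 * B)) / 6 *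
              (of_int (lucas_u A B n) / of_int (lucas_v A B n)))"
proof (cases "is_unit d")
  case True
  then show ?thesis
    using is_unit_power_iff by (intro divisible_at_unit) blast
next
  case False
  with assms show ?thesis
    by (intro lucas_primitive_divisor.ratio_sum_cong) (simp add: lucas_primitive_divisor_def)
qed

lemma lucas_w_primitive:
  assumes "lucas_u A B n \<noteq> 0 \<or> (\<exists>j\<in>{1..<n}. lucas_u A B j = 0)"
  shows "lucas_w A B n dvd lucas_u A B n \<and> (\<forall>j\<in>{1..<n}. coprime (lucas_w A B n) (lucas_u A B j))"
proof -
  define P where "P d \<longleftrightarrow> d dvd lucas_u A B n \<and> (\<forall>j\<in>{1..<n}. coprime d (lucas_u A B j))" for d
  have "finite {d. P d}"
  proof (cases "lucas_u A B n = 0")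
    case False
    then have "{d. P d} \<subseteq> {- \<bar>lucas_u A B n\<bar>..\<bar>lucas_u A B n\<bar>}"
      by (auto simp: P_def abs_le_iff dest!: dvd_imp_le_int)
    then show ?thesis
      by (rule finite_subset) simp
  next
    case True
    with assms obtain j where "j \<in> {1..<n}" "lucas_u A B j = 0"
      by auto
    then have "\<bar>d\<bar> = 1" if "P d" for d
      using that by (auto simp: P_def dest: bspec[of _ _ j])
    then have "{d. P d} \<subseteq> {-1..1}"
      by (force simp: abs_eq_iff)
    then show ?thesis
      by (rule finite_subset) simp
  qed
  moreover have "P 1"
    by (simp add: P_def)
  ultimately have "P (Greatest P)"
    using Greatest_Max[of P] Max_in[of "{d. P d}"] by (metis empty_iff mem_Collect_eq)
  then show ?thesis
    unfolding lucas_w_def P_def .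
qed

lemma lucas_ratio_sum_eq_0:
  assumes "n \<ge> 5" "lucas_u A B n = 0" "\<forall>j\<in>{1..<n}. lucas_u A B j \<noteq> 0"
  shows "(\<Sum>j=1..n-1. of_int (lucas_v A B j) / of_int (lucas_u A B j) :: rat) = 0"
    (is "?S = 0")
proof (rule divisible_at_unbounded_imp_zero)
  fix k :: int
  obtain d where "d \<ge> k" and coprime: "\<forall>j\<in>{1..<n}. coprime d (lucas_u A B j)"
    using exists_large_coprime[of "{1..<n}" "lucas_u A B" k] assms(3) by auto
  have "d \<le> d ^ 2"
    by (cases "d \<le> 0") (simp_all add: order_trans[OF _ zero_le_power2] self_le_power)
  moreover have "divisible_at (d ^ 2) ?S"
    using lucas_ratio_sum_cong[OF assms(1) _ coprime] assms(2) by simp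
  ultimately show "\<exists>d' \<ge> k. divisible_at d' ?S"
    using \<open>d \<ge> k\<close> by (intro exI[of _ "d ^ 2"]) simp
qed

theorem theorem1p1:
  fixes A B :: int and n :: nat
  assumes "A \<noteq> 0" and "B \<noteq> 0" and "n \<ge> 5"
  shows "rat_cong
           (\<Sum>j=1..n-1. of_int (lucas_v A B j) / of_int (lucas_u A B j))
           (of_int ((int n ^ 2 - 1) * (A ^ 2 - 4 * B)) / 6 *
              (of_int (lucas_u A B n) / of_int (lucas_v A B n)))
           ((lucas_w A B n) ^ 2)"
proof (cases "lucas_u A B n \<noteq> 0 \<or> (\<exists>j\<in>{1..<n}. lucas_u A B j = 0)")
  case True
  then have "lucas_w A B n dvd lucas_u A B n"
    and "\<forall>j\<in>{1..<n}. coprime (lucas_w A B n) (lucas_u A B j)"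
    by (simp_all add: lucas_w_primitive)
  with \<open>n \<ge> 5\<close> show ?thesis
    unfolding rat_cong_iff_divisible_at by (rule lucas_ratio_sum_cong)
next
  case False
  (* Now lucas_w is a GREATEST over an unbounded set (e.g. A = B = 3, n = 6), hence
     unspecified; but both sides vanish. *)
  then have "lucas_u A B n = 0" and "\<forall>j\<in>{1..<n}. lucas_u A B j \<noteq> 0"
    by auto
  with \<open>n \<ge> 5\<close> have "(\<Sum>j=1..n-1. of_int (lucas_v A B j) / of_int (lucas_u A B j) :: rat) = 0"
    by (rule lucas_ratio_sum_eq_0)
  with \<open>lucas_u A B n = 0\<close> show ?thesis
    unfolding rat_cong_iff_divisible_at by (simp add: divisible_at_0)
qed

end
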